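(* Let $(K^{(n)})_{n\ge1}$ be a consistent family of Markov kernels, $K^{(n)}$ an order-preserving Markov kernel on $\mathbb{R}^n$ for each $n$. Then for all $n\ge2$ and every bounded Borel supermodular $f:\mathbb{R}^n\to\mathbb{R}$, $K^{(n)}f$ is a bounded Borel supermodular function.
   Context: $f$ is supermodular if $f(\mathbf{x})+f(\mathbf{y})\le f(\mathbf{x}\vee\mathbf{y})+f(\mathbf{x}\wedge\mathbf{y})$ for all $\mathbf{x},\mathbf{y}$, with $\vee,\wedge$ componentwise max and min. $K^{(n)}f(\mathbf{x})=\int f(\mathbf{y})K^{(n)}(\mathbf{x},d\mathbf{y})$. A kernel $K$ on $\mathbb{R}^n$ is order-preserving if $K(\mathbf{x},\mathbb{R}^n_{\mathbf{x}})=1$ for all $\mathbf{x}$, where $\mathbb{R}^n_{\mathbf{x}}=\{\mathbf{y}:\forall i,j,\ x_i\le x_j\Rightarrow y_i\le y_j\}$. The family is consistent if $K^{(n)}(\mathbf{x},(\pi^n_{i_1,\dots,i_k})^{-1}(B))=K^{(k)}(\pi^n_{i_1,\dots,i_k}(\mathbf{x}),B)$ for all $1\le k\le n$, $i_1,\dots,i_k\in\{1,\dots,n\}$ (repetitions allowed), $\mathbf{x}\in\mathbb{R}^n$ and Borel $B\subset\mathbb{R}^k$, where $\pi^n_{i_1,\dots,i_k}(\mathbf{x})=(x_{i_1},\dots,x_{i_k})$. *)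

theory Defs
  imports "HOL-Probability.Probability"
begin

text \<open>R^n is modelled as the extensional functions on the index set {..<n}
  (coordinates 0..n-1) with the product Borel sigma-algebra.\<close>
definition Rn :: "nat \<Rightarrow> (nat \<Rightarrow> real) measure" where
  "Rn n = PiM {..<n} (\<lambda>_. borel)"

definition vmax :: "nat \<Rightarrow> (nat \<Rightarrow> real) \<Rightarrow> (nat \<Rightarrow> real) \<Rightarrow> (nat \<Rightarrow> real)" where
  "vmax n x y = (\<lambda>i\<in>{..<n}. max (x i) (y i))"

definition vmin :: "nat \<Rightarrow> (nat \<Rightarrow> real) \<Rightarrow> (nat \<Rightarrow> real) \<Rightarrow> (nat \<Rightarrow> real)" where
  "vmin n x y = (\<lambda>i\<in>{..<n}. min (x i) (y i))"

definition supermodular :: "nat \<Rightarrow> ((nat \<Rightarrow> real) \<Rightarrow> real) \<Rightarrow> bool" where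
  "supermodular n f \<longleftrightarrow>
     (\<forall>x\<in>space (Rn n). \<forall>y\<in>space (Rn n). f x + f y \<le> f (vmax n x y) + f (vmin n x y))"

definition bounded_on_Rn :: "nat \<Rightarrow> ((nat \<Rightarrow> real) \<Rightarrow> real) \<Rightarrow> bool" where
  "bounded_on_Rn n f \<longleftrightarrow> (\<exists>C. \<forall>x\<in>space (Rn n). \<bar>f x\<bar> \<le> C)"

definition markov_kernel :: "nat \<Rightarrow> ((nat \<Rightarrow> real) \<Rightarrow> (nat \<Rightarrow> real) measure) \<Rightarrow> bool" where
  "markov_kernel n K \<longleftrightarrow> K \<in> Rn n \<rightarrow>\<^sub>M prob_algebra (Rn n)"

definition order_set :: "nat \<Rightarrow> (nat \<Rightarrow> real) \<Rightarrow> (nat \<Rightarrow> real) set" where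
  "order_set n x = {y \<in> space (Rn n). \<forall>i<n. \<forall>j<n. x i \<le> x j \<longrightarrow> y i \<le> y j}"

definition order_preserving :: "nat \<Rightarrow> ((nat \<Rightarrow> real) \<Rightarrow> (nat \<Rightarrow> real) measure) \<Rightarrow> bool" where
  "order_preserving n K \<longleftrightarrow> (\<forall>x\<in>space (Rn n). emeasure (K x) (order_set n x) = 1)"

text \<open>Coordinate projection pi^n_{i_1..i_k} (0-based indices i 0, ..., i (k-1)).\<close>
definition proj :: "nat \<Rightarrow> (nat \<Rightarrow> nat) \<Rightarrow> (nat \<Rightarrow> real) \<Rightarrow> (nat \<Rightarrow> real)" where
  "proj k i x = (\<lambda>j\<in>{..<k}. x (i j))"

definition consistent :: "(nat \<Rightarrow> (nat \<Rightarrow> real) \<Rightarrow> (nat \<Rightarrow> real) measure) \<Rightarrow> bool" where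
  "consistent K \<longleftrightarrow>
     (\<forall>n\<ge>1. \<forall>k. 1 \<le> k \<and> k \<le> n \<longrightarrow> (\<forall>i. (\<forall>j<k. i j < n) \<longrightarrow>
        (\<forall>x\<in>space (Rn n). \<forall>B\<in>sets (Rn k).
           emeasure (K n x) (proj k i -` B \<inter> space (Rn n)) = emeasure (K k (proj k i x)) B)))"

definition kernel_apply :: "((nat \<Rightarrow> real) \<Rightarrow> (nat \<Rightarrow> real) measure) \<Rightarrow> ((nat \<Rightarrow> real) \<Rightarrow> real) \<Rightarrow> (nat \<Rightarrow> real) \<Rightarrow> real" where
  "kernel_apply K f x = (\<integral>y. f y \<partial>K x)"

end

theory Submission
  imports Defs
begin

text \<open>Place x and y side by side as one point z of R^2n. By consistency, the images of K^2n(z)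
  under the coordinate selections w |-> (w_j)_{j<n} and w |-> (w_{n+j})_{j<n} are K^n(x) and
  K^n(y), and, selecting in each coordinate the copy where z is larger (smaller), K^n(x \<or> y)
  and K^n(x \<and> y). As K^2n(z) is carried by points ordered like z, almost surely the last two
  selections are the componentwise max and min of the first two, so the pointwise
  supermodularity of f integrates to that of K^n f.\<close>

lemma measurable_proj:
  assumes "i \<in> {..<k} \<rightarrow> {..<m}"
  shows "proj k i \<in> Rn m \<rightarrow>\<^sub>M Rn k"
  unfolding proj_def Rn_def
  by (intro measurable_restrict measurable_component_singleton) (use assms in auto)

lemma
  assumes "markov_kernel n K" "x \<in> space (Rn n)"
  shows sets_markov_kernel: "sets (K x) = sets (Rn n)"
    and prob_space_markov_kernel: "prob_space (K x)"
  using measurable_space[OF assms(1)[unfolded markov_kernel_def] assms(2)]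
  by (auto simp: space_prob_algebra)

lemma space_markov_kernel:
  "markov_kernel n K \<Longrightarrow> x \<in> space (Rn n) \<Longrightarrow> space (K x) = space (Rn n)"
  by (rule sets_eq_imp_space_eq[OF sets_markov_kernel])

lemma measurable_markov_kernel_iff:
  "markov_kernel n K \<Longrightarrow> x \<in> space (Rn n) \<Longrightarrow> (K x \<rightarrow>\<^sub>M N) = (Rn n \<rightarrow>\<^sub>M N)"
  by (rule measurable_cong_sets[OF sets_markov_kernel refl])

lemma integrable_markov_kernel:
  assumes K: "markov_kernel n K" and x: "x \<in> space (Rn n)"
    and f: "f \<in> borel_measurable (Rn n)" and bdd: "bounded_on_Rn n f"
  shows "integrable (K x) f"
proof -
  interpret prob_space "K x" using prob_space_markov_kernel[OF K x] .
  obtain C where "\<forall>y\<in>space (Rn n). \<bar>f y\<bar> \<le> C" using bdd unfolding bounded_on_Rn_def ..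
  then show ?thesis
    using f measurable_markov_kernel_iff[OF K x] space_markov_kernel[OF K x]
    by (intro integrable_const_bound[of f C]) auto
qed

lemma measurable_kernel_apply:
  assumes "markov_kernel n K" "f \<in> borel_measurable (Rn n)"
  shows "kernel_apply K f \<in> borel_measurable (Rn n)"
  using measurable_comp[OF measurable_prob_algebraD[OF assms(1)[unfolded markov_kernel_def]]
      integral_measurable_subprob_algebra[OF assms(2)]]
  by (simp add: comp_def kernel_apply_def[abs_def])

lemma bounded_on_Rn_kernel_apply:
  assumes K: "markov_kernel n K" and f: "f \<in> borel_measurable (Rn n)" and bdd: "bounded_on_Rn n f"
  shows "bounded_on_Rn n (kernel_apply K f)"
proof -
  obtain C where C: "\<forall>y\<in>space (Rn n). \<bar>f y\<bar> \<le> C" using bdd unfolding bounded_on_Rn_def ..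
  have "\<bar>kernel_apply K f x\<bar> \<le> C" if x: "x \<in> space (Rn n)" for x
  proof -
    interpret prob_space "K x" using prob_space_markov_kernel[OF K x] .
    have "\<bar>\<integral>y. f y \<partial>K x\<bar> \<le> (\<integral>y. \<bar>f y\<bar> \<partial>K x)"
      by (rule integral_abs_bound)
    also have "\<dots> \<le> C"
      using integrable_markov_kernel[OF K x f bdd] C space_markov_kernel[OF K x]
      by (intro integral_le_const) auto
    finally show ?thesis unfolding kernel_apply_def .
  qed
  then show ?thesis unfolding bounded_on_Rn_def by blast
qed

lemma distr_proj_consistent:
  assumes cons: "consistent K" and Kk: "markov_kernel k (K k)" and Km: "markov_kernel m (K m)"
    and "1 \<le> k" "k \<le> m" and i: "i \<in> {..<k} \<rightarrow> {..<m}" and z: "z \<in> space (Rn m)"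
  shows "distr (K m z) (Rn k) (proj k i) = K k (proj k i z)"
proof (rule measure_eqI)
  have "proj k i z \<in> space (Rn k)" using measurable_space[OF measurable_proj[OF i] z] .
  then show "sets (distr (K m z) (Rn k) (proj k i)) = sets (K k (proj k i z))"
    using sets_markov_kernel[OF Kk] by simp
  fix B assume "B \<in> sets (distr (K m z) (Rn k) (proj k i))"
  then have B: "B \<in> sets (Rn k)" by simp
  have p: "proj k i \<in> K m z \<rightarrow>\<^sub>M Rn k"
    using measurable_proj[OF i] measurable_markov_kernel_iff[OF Km z] by blast
  have "emeasure (distr (K m z) (Rn k) (proj k i)) B = emeasure (K m z) (proj k i -` B \<inter> space (Rn m))"
    using emeasure_distr[OF p B] space_markov_kernel[OF Km z] by simp
  also have "\<dots> = emeasure (K k (proj k i z)) B"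
  proof -
    have "\<forall>j<k. i j < m" "1 \<le> m" using i \<open>1 \<le> k\<close> \<open>k \<le> m\<close> by auto
    then show ?thesis using cons \<open>1 \<le> k\<close> \<open>k \<le> m\<close> z B unfolding consistent_def by blast
  qed
  finally show "emeasure (distr (K m z) (Rn k) (proj k i)) B = emeasure (K k (proj k i z)) B" .
qed

lemma
  assumes cons: "consistent K" and Kk: "markov_kernel k (K k)" and Km: "markov_kernel m (K m)"
    and km: "1 \<le> k" "k \<le> m" and i: "i \<in> {..<k} \<rightarrow> {..<m}" and z: "z \<in> space (Rn m)"
    and f: "f \<in> borel_measurable (Rn k)"
  shows kernel_apply_proj_consistent:
      "kernel_apply (K k) f (proj k i z) = (\<integral>w. f (proj k i w) \<partial>K m z)"
    and integrable_proj_consistent: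
      "bounded_on_Rn k f \<Longrightarrow> integrable (K m z) (\<lambda>w. f (proj k i w))"
proof -
  have distr: "distr (K m z) (Rn k) (proj k i) = K k (proj k i z)"
    by (rule distr_proj_consistent[OF cons Kk Km km i z])
  have p: "proj k i \<in> K m z \<rightarrow>\<^sub>M Rn k"
    using measurable_proj[OF i] measurable_markov_kernel_iff[OF Km z] by blast
  show "kernel_apply (K k) f (proj k i z) = (\<integral>w. f (proj k i w) \<partial>K m z)"
    using integral_distr[OF p f] distr by (simp add: kernel_apply_def)
  assume "bounded_on_Rn k f"
  then show "integrable (K m z) (\<lambda>w. f (proj k i w))"
    using integrable_distr[OF p] integrable_markov_kernel[OF Kk _ f] distr
      measurable_space[OF measurable_proj[OF i] z] by metis
qed

lemma order_set_max_min:
  assumes w: "w \<in> order_set m z" and "a < m" "b < m"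
  shows "w (if z b \<le> z a then a else b) = max (w a) (w b)"
    and "w (if z b \<le> z a then b else a) = min (w a) (w b)"
proof -
  have mono: "z c \<le> z d \<Longrightarrow> w c \<le> w d" if "c \<in> {a, b}" "d \<in> {a, b}" for c d
    using w that assms by (auto simp: order_set_def)
  show "w (if z b \<le> z a then a else b) = max (w a) (w b)"
    and "w (if z b \<le> z a then b else a) = min (w a) (w b)"
    using mono[of b a] mono[of a b] by auto
qed

definition vappend :: "nat \<Rightarrow> (nat \<Rightarrow> real) \<Rightarrow> (nat \<Rightarrow> real) \<Rightarrow> nat \<Rightarrow> real" where
  "vappend n x y = (\<lambda>j\<in>{..<2 * n}. if j < n then x j else y (j - n))"

definition upper_index :: "nat \<Rightarrow> (nat \<Rightarrow> real) \<Rightarrow> nat \<Rightarrow> nat" where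
  "upper_index n z j = (if z (n + j) \<le> z j then j else n + j)"

definition lower_index :: "nat \<Rightarrow> (nat \<Rightarrow> real) \<Rightarrow> nat \<Rightarrow> nat" where
  "lower_index n z j = (if z (n + j) \<le> z j then n + j else j)"

lemma vappend_in_space: "vappend n x y \<in> space (Rn (2 * n))"
  by (simp add: vappend_def Rn_def space_PiM)

lemma
  shows proj_vappend_fst: "x \<in> space (Rn n) \<Longrightarrow> proj n (\<lambda>j. j) (vappend n x y) = x"
    and proj_vappend_snd: "y \<in> space (Rn n) \<Longrightarrow> proj n ((+) n) (vappend n x y) = y"
  by (auto simp: proj_def vappend_def Rn_def space_PiM PiE_def extensional_def fun_eq_iff)

lemma index_maps_into:
  "(\<lambda>j. j) \<in> {..<n} \<rightarrow> {..<2 * n}" "(+) n \<in> {..<n} \<rightarrow> {..<2 * n}"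
  "upper_index n z \<in> {..<n} \<rightarrow> {..<2 * n}" "lower_index n z \<in> {..<n} \<rightarrow> {..<2 * n}"
  by (auto simp: upper_index_def lower_index_def)

lemma
  assumes "w \<in> order_set (2 * n) z"
  shows proj_upper_index: "proj n (upper_index n z) w = vmax n (proj n (\<lambda>j. j) w) (proj n ((+) n) w)"
    and proj_lower_index: "proj n (lower_index n z) w = vmin n (proj n (\<lambda>j. j) w) (proj n ((+) n) w)"
  using order_set_max_min[OF assms, of _ "n + _"]
  by (auto simp: proj_def vmax_def vmin_def upper_index_def lower_index_def fun_eq_iff)

lemma self_in_order_set: "z \<in> space (Rn n) \<Longrightarrow> z \<in> order_set n z"
  by (simp add: order_set_def)

lemma supermodular_kernel_apply:
  assumes cons: "consistent K" and "1 \<le> n"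
    and Kn: "markov_kernel n (K n)" and K2n: "markov_kernel (2 * n) (K (2 * n))"
    and ord: "order_preserving (2 * n) (K (2 * n))"
    and f: "f \<in> borel_measurable (Rn n)" and bdd: "bounded_on_Rn n f" and sm: "supermodular n f"
  shows "supermodular n (kernel_apply (K n) f)"
  unfolding supermodular_def
proof (intro ballI)
  fix x y assume x: "x \<in> space (Rn n)" and y: "y \<in> space (Rn n)"
  define z where "z = vappend n x y"
  let ?M = "K (2 * n) z" and ?Kf = "kernel_apply (K n) f"
    and ?g = "\<lambda>i w. f (proj n i w)" and ?up = "upper_index n z" and ?lo = "lower_index n z"
  have z: "z \<in> space (Rn (2 * n))" unfolding z_def by (rule vappend_in_space)
  have nm: "1 \<le> n" "n \<le> 2 * n" using \<open>1 \<le> n\<close> by auto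
  have Kf_g: "?Kf (proj n i z) = (\<integral>w. ?g i w \<partial>?M)" if "i \<in> {..<n} \<rightarrow> {..<2 * n}" for i
    by (rule kernel_apply_proj_consistent[OF cons Kn K2n nm that z f])
  have int_g: "integrable ?M (?g i)" if "i \<in> {..<n} \<rightarrow> {..<2 * n}" for i
    by (rule integrable_proj_consistent[OF cons Kn K2n nm that z f bdd])
  have z_coords: "proj n (\<lambda>j. j) z = x" "proj n ((+) n) z = y"
    "proj n ?up z = vmax n x y" "proj n ?lo z = vmin n x y"
    using proj_vappend_fst[OF x] proj_vappend_snd[OF y] self_in_order_set[OF z]
      proj_upper_index proj_lower_index by (simp_all add: z_def)
  have "AE w in ?M. w \<in> order_set (2 * n) z"
    using prob_space.AE_prob_1[OF prob_space_markov_kernel[OF K2n z]] ord z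
    by (simp add: order_preserving_def measure_def)
  then have "AE w in ?M. ?g (\<lambda>j. j) w + ?g ((+) n) w \<le> ?g ?up w + ?g ?lo w"
  proof eventually_elim
    case (elim w)
    then have "w \<in> space (Rn (2 * n))" by (simp add: order_set_def)
    then have "proj n i w \<in> space (Rn n)" if "i \<in> {..<n} \<rightarrow> {..<2 * n}" for i
      using measurable_space[OF measurable_proj[OF that]] by blast
    then show ?case
      using sm index_maps_into proj_upper_index[OF elim] proj_lower_index[OF elim]
      unfolding supermodular_def by simp
  qed
  then have "(\<integral>w. ?g (\<lambda>j. j) w + ?g ((+) n) w \<partial>?M) \<le> (\<integral>w. ?g ?up w + ?g ?lo w \<partial>?M)"
    using int_g index_maps_into by (intro integral_mono_AE) auto
  moreover have "?Kf x + ?Kf y = (\<integral>w. ?g (\<lambda>j. j) w + ?g ((+) n) w \<partial>?M)"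
    using Kf_g[of "\<lambda>j. j"] Kf_g[of "(+) n"] int_g[of "\<lambda>j. j"] int_g[of "(+) n"]
      index_maps_into z_coords by simp
  moreover have "?Kf (vmax n x y) + ?Kf (vmin n x y) = (\<integral>w. ?g ?up w + ?g ?lo w \<partial>?M)"
    using Kf_g[of ?up] Kf_g[of ?lo] int_g[of ?up] int_g[of ?lo] index_maps_into z_coords by simp
  ultimately show "?Kf x + ?Kf y \<le> ?Kf (vmax n x y) + ?Kf (vmin n x y)"
    by linarith
qed

theorem proposition4p1:
  fixes K :: "nat \<Rightarrow> (nat \<Rightarrow> real) \<Rightarrow> (nat \<Rightarrow> real) measure"
  assumes markov: "\<And>n. n \<ge> 1 \<Longrightarrow> markov_kernel n (K n)"
    and ord: "\<And>n. n \<ge> 1 \<Longrightarrow> order_preserving n (K n)"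
    and cons: "consistent K"
    and n: "n \<ge> 2"
    and f_meas: "f \<in> borel_measurable (Rn n)"
    and f_bdd: "bounded_on_Rn n f"
    and f_sm: "supermodular n f"
  shows "kernel_apply (K n) f \<in> borel_measurable (Rn n)
       \<and> bounded_on_Rn n (kernel_apply (K n) f)
       \<and> supermodular n (kernel_apply (K n) f)"
proof -
  have "1 \<le> n" "1 \<le> 2 * n" using n by auto
  then have Kn: "markov_kernel n (K n)" and K2n: "markov_kernel (2 * n) (K (2 * n))"
    and ord2n: "order_preserving (2 * n) (K (2 * n))"
    using markov ord by auto
  show ?thesis
    using measurable_kernel_apply[OF Kn f_meas] bounded_on_Rn_kernel_apply[OF Kn f_meas f_bdd]
      supermodular_kernel_apply[OF cons \<open>1 \<le> n\<close> Kn K2n ord2n f_meas f_bdd f_sm] by blast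
qed

end
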